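(* Fix $k\ge1$. Let $H$ be the free abelian group with basis $\{h_{i_1\dots i_{2k+3}}\mid\{i_1,\dots,i_{2k+3}\}=\{1,\dots,2k+3\}\}$, and let $P$ be the subgroup of $H$ generated by all elements \[h_{i_1\dots i_{2k+3}}-\operatorname{sgn}(\sigma)\,h_{i_{\sigma(1)}\dots i_{\sigma(2k+3)}}\qquad(\sigma\in S_{2k+3})\] and \[h_{i_1\dots i_{2k}\,i_{2k+1}\,i_{2k+2}\,i_{2k+3}}+h_{i_1\dots i_{2k}\,i_{2k+2}\,i_{2k+3}\,i_{2k+1}}+h_{i_1\dots i_{2k}\,i_{2k+3}\,i_{2k+1}\,i_{2k+2}},\] where $\{i_1,\dots,i_{2k+3}\}=\{1,\dots,2k+3\}$. Then $h_{12\dots(2k+3)}\notin P$. *)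

theory Defs
  imports "HOL-Combinatorics.Permutations"
begin

text \<open>A basis element h_{i_1 ... i_n} (with {i_1,...,i_n} = {1,...,n}) is encoded by the
  bijection p of {1..n} with p j = i_j.  The free abelian group H is realised as
  integer-valued functions on such index functions; hbasis p is the basis vector h_p.\<close>

definition hbasis :: "(nat \<Rightarrow> nat) \<Rightarrow> ((nat \<Rightarrow> nat) \<Rightarrow> int)" where
  "hbasis p = (\<lambda>q. if q = p then 1 else 0)"

definition int_gen :: "(('a \<Rightarrow> int) set) \<Rightarrow> ('a \<Rightarrow> int) set" where
  "int_gen S = {(\<lambda>x. \<Sum>g\<in>T. c g * g x) | T c. finite T \<and> T \<subseteq> S}"

definition antisym_gens :: "nat \<Rightarrow> ((nat \<Rightarrow> nat) \<Rightarrow> int) set" where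
  "antisym_gens k = {(\<lambda>x. hbasis p x - sign \<sigma> * hbasis (p \<circ> \<sigma>) x) | p \<sigma>.
      p permutes {1..2*k+3} \<and> \<sigma> permutes {1..2*k+3}}"

definition jacobi_gens :: "nat \<Rightarrow> ((nat \<Rightarrow> nat) \<Rightarrow> int) set" where
  "jacobi_gens k = {(\<lambda>x. hbasis p x
      + hbasis (p(2*k+1 := p (2*k+2), 2*k+2 := p (2*k+3), 2*k+3 := p (2*k+1))) x
      + hbasis (p(2*k+1 := p (2*k+3), 2*k+2 := p (2*k+1), 2*k+3 := p (2*k+2))) x) | p.
      p permutes {1..2*k+3}}"

definition Psub :: "nat \<Rightarrow> ((nat \<Rightarrow> nat) \<Rightarrow> int) set" where
  "Psub k = int_gen (antisym_gens k \<union> jacobi_gens k)"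

end

theory Submission
  imports Defs
begin

text \<open>The signed sum \<open>v \<mapsto> \<Sum>\<^sub>q sign q * v q\<close> over the permutations q of \<open>{1..2k+3}\<close>
  is additive, kills every antisymmetry generator and sends each Jacobi generator based at p
  to \<open>3 * sign p\<close>, because cyclically rotating three positions is an even permutation.
  Hence it maps P into \<open>3\<int>\<close>, whereas it sends \<open>h\<^sub>1\<^sub>2\<^sub>\<dots>\<^sub>(\<^sub>2\<^sub>k\<^sub>+\<^sub>3\<^sub>)\<close> to 1.\<close>

definition signed_sum :: "'a set \<Rightarrow> (('a \<Rightarrow> 'a) \<Rightarrow> int) \<Rightarrow> int" where
  "signed_sum S v = (\<Sum>q\<in>{q. q permutes S}. sign q * v q)"

lemma signed_sum_hbasis:
  assumes "finite S" and "p permutes S"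
  shows "signed_sum S (hbasis p) = sign p"
proof -
  have "signed_sum S (hbasis p) = (\<Sum>q\<in>{q. q permutes S}. if q = p then sign q else 0)"
    unfolding signed_sum_def hbasis_def by (rule sum.cong) auto
  also have "\<dots> = sign p"
    using assms by (simp add: sum.delta' finite_permutations)
  finally show ?thesis .
qed

lemma signed_sum_add:
  "signed_sum S (\<lambda>x. f x + g x) = signed_sum S f + signed_sum S g"
  unfolding signed_sum_def by (simp add: distrib_left sum.distrib)

lemma signed_sum_lincomb:
  "signed_sum S (\<lambda>x. \<Sum>g\<in>T. c g * g x) = (\<Sum>g\<in>T. c g * signed_sum S g)"
  unfolding signed_sum_def
  by (simp add: sum_distrib_left mult_ac sum.swap[of _ T])

lemma signed_sum_int_gen_dvd:
  assumes "v \<in> int_gen G" and "\<And>g. g \<in> G \<Longrightarrow> m dvd signed_sum S g"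
  shows "m dvd signed_sum S v"
proof -
  obtain T c where "T \<subseteq> G" and v: "v = (\<lambda>x. \<Sum>g\<in>T. c g * g x)"
    using assms(1) unfolding int_gen_def by blast
  then show ?thesis
    using assms(2) by (simp add: signed_sum_lincomb dvd_sum subset_iff)
qed

lemma signed_sum_antisym:
  assumes "finite S" and "p permutes S" and "\<sigma> permutes S"
  shows "signed_sum S (\<lambda>x. hbasis p x - sign \<sigma> * hbasis (p \<circ> \<sigma>) x) = 0"
proof -
  have perm: "permutation p" "permutation \<sigma>"
    using assms permutation_permutes by blast+
  have "signed_sum S (\<lambda>x. hbasis p x - sign \<sigma> * hbasis (p \<circ> \<sigma>) x)
      = signed_sum S (hbasis p) - sign \<sigma> * signed_sum S (hbasis (p \<circ> \<sigma>))"
    unfolding signed_sum_def by (simp add: algebra_simps sum_subtractf sum_distrib_left)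
  also have "\<dots> = sign p - sign \<sigma> * (sign p * sign \<sigma>)"
    using assms perm by (simp add: signed_sum_hbasis permutes_compose sign_compose)
  also have "\<dots> = 0"
    by (simp add: sign_idempotent flip: mult.assoc)
  finally show ?thesis .
qed

lemma fun_upd_rotate3:
  assumes "distinct [a, b, c]"
  shows "p(a := p b, b := p c, c := p a) = p \<circ> transpose a b \<circ> transpose b c"
  using assms by (auto simp: transpose_def)

lemma permutes_rotate3:
  assumes "p permutes S" and "a \<in> S" "b \<in> S" "c \<in> S"
  shows "p \<circ> transpose a b \<circ> transpose b c permutes S"
  using assms by (intro permutes_compose permutes_swap_id)

lemma sign_rotate3:
  assumes "permutation p" and "distinct [a, b, c]"
  shows "sign (p \<circ> transpose a b \<circ> transpose b c) = sign p"
  using assms by (simp add: sign_compose permutation_compose permutation_swap_id sign_swap_id)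

lemma signed_sum_rotations:
  assumes "finite S" and "p permutes S" and "a \<in> S" "b \<in> S" "c \<in> S" "distinct [a, b, c]"
  shows "signed_sum S (\<lambda>x. hbasis p x + hbasis (p(a := p b, b := p c, c := p a)) x
      + hbasis (p(a := p c, b := p a, c := p b)) x) = 3 * sign p"
proof -
  have bac: "distinct [b, a, c]"
    using assms(6) by auto
  have rot2: "p(a := p c, b := p a, c := p b) = p \<circ> transpose b a \<circ> transpose a c"
    using fun_upd_rotate3[OF bac, of p] assms(6) by (auto simp: fun_upd_twist)
  have "permutation p"
    using assms(1,2) permutation_permutes by blast
  then show ?thesis
    using assms bac
    unfolding fun_upd_rotate3[OF assms(6)] rot2
    by (simp add: signed_sum_add signed_sum_hbasis permutes_rotate3 sign_rotate3)
qed

theorem lemma3p8: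
  fixes k :: nat
  assumes "k \<ge> 1"
  shows "hbasis id \<notin> Psub k"
proof
  let ?S = "{1..2*k+3}"
  have gens: "3 dvd signed_sum ?S g" if "g \<in> antisym_gens k \<union> jacobi_gens k" for g
    using that unfolding antisym_gens_def jacobi_gens_def
    by (auto simp: signed_sum_antisym signed_sum_rotations)
  assume "hbasis id \<in> Psub k"
  then have "3 dvd signed_sum ?S (hbasis id)"
    unfolding Psub_def by (rule signed_sum_int_gen_dvd) (rule gens)
  moreover have "signed_sum ?S (hbasis id) = 1"
    by (simp add: signed_sum_hbasis permutes_id)
  ultimately show False by simp
qed

end
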